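(* There exists a nontotal pca $\mathcal{A}$ (i.e. $ab$ is undefined for some $a,b\in\mathcal{A}$) in which $0$ and $1$ are not separable.
   Context: A pca is a set $\mathcal{A}$ with partial binary application containing $k,s$ with $kab=a$, $sab\downarrow$, $sabc\simeq ac(bc)$. With $i=skk$, $\mathsf{false}=ki$, $\langle a,b\rangle=\lambda^*z.zab$ ($\lambda^*$ standard combinatory abstraction), $0=\bar 0=i$, $\overline{n+1}=\langle\mathsf{false},\bar n\rangle$, $1=\bar 1$. $0,1$ are separable in $\mathcal{A}$ if there is a total $c\in\mathcal{A}$ with $ca\in\{0,1\}$ for all $a$ such that $ca=0\Rightarrow a\neq 1$ and $ca=1\Rightarrow a\neq 0$. *)

theory Defs
  imports Main
begin

text \<open>A partial applicative structure on a carrier A (inside an ambient type 'a):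
  app a b = None means that a b is undefined.\<close>

definition pap :: "('a \<Rightarrow> 'a \<Rightarrow> 'a option) \<Rightarrow> 'a option \<Rightarrow> 'a option \<Rightarrow> 'a option" where
  "pap app ma mb = (case ma of None \<Rightarrow> None | Some a \<Rightarrow>
                      (case mb of None \<Rightarrow> None | Some b \<Rightarrow> app a b))"

definition pca :: "'a set \<Rightarrow> ('a \<Rightarrow> 'a \<Rightarrow> 'a option) \<Rightarrow> 'a \<Rightarrow> 'a \<Rightarrow> bool" where
  "pca A app k s \<longleftrightarrow>
     k \<in> A \<and> s \<in> A \<and>
     (\<forall>a\<in>A. \<forall>b\<in>A. \<forall>c. app a b = Some c \<longrightarrow> c \<in> A) \<and>
     (\<forall>a\<in>A. \<forall>b\<in>A. pap app (app k a) (Some b) = Some a) \<and>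
     (\<forall>a\<in>A. \<forall>b\<in>A. pap app (app s a) (Some b) \<noteq> None) \<and>
     (\<forall>a\<in>A. \<forall>b\<in>A. \<forall>c\<in>A.
        pap app (pap app (app s a) (Some b)) (Some c)
          = pap app (app a c) (app b c))"

text \<open>Combinators: i = skk, false = ki, and pairing
  <a,b> = lambda* z. z a b = s (s i (k a)) (k b) (standard combinatory abstraction).\<close>

definition comb_i :: "('a \<Rightarrow> 'a \<Rightarrow> 'a option) \<Rightarrow> 'a \<Rightarrow> 'a \<Rightarrow> 'a option" where
  "comb_i app k s = pap app (app s k) (Some k)"

definition comb_false :: "('a \<Rightarrow> 'a \<Rightarrow> 'a option) \<Rightarrow> 'a \<Rightarrow> 'a \<Rightarrow> 'a option" where
  "comb_false app k s = pap app (Some k) (comb_i app k s)"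

definition comb_pair :: "('a \<Rightarrow> 'a \<Rightarrow> 'a option) \<Rightarrow> 'a \<Rightarrow> 'a \<Rightarrow> 'a option \<Rightarrow> 'a option \<Rightarrow> 'a option" where
  "comb_pair app k s ma mb =
     pap app (pap app (Some s)
                (pap app (pap app (Some s) (comb_i app k s)) (pap app (Some k) ma)))
             (pap app (Some k) mb)"

fun numeral_pca :: "('a \<Rightarrow> 'a \<Rightarrow> 'a option) \<Rightarrow> 'a \<Rightarrow> 'a \<Rightarrow> nat \<Rightarrow> 'a option" where
  "numeral_pca app k s 0 = comb_i app k s"
| "numeral_pca app k s (Suc n) = comb_pair app k s (comb_false app k s) (numeral_pca app k s n)"

definition zero_pca :: "('a \<Rightarrow> 'a \<Rightarrow> 'a option) \<Rightarrow> 'a \<Rightarrow> 'a \<Rightarrow> 'a" where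
  "zero_pca app k s = the (numeral_pca app k s 0)"

definition one_pca :: "('a \<Rightarrow> 'a \<Rightarrow> 'a option) \<Rightarrow> 'a \<Rightarrow> 'a \<Rightarrow> 'a" where
  "one_pca app k s = the (numeral_pca app k s 1)"

definition separable01 :: "'a set \<Rightarrow> ('a \<Rightarrow> 'a \<Rightarrow> 'a option) \<Rightarrow> 'a \<Rightarrow> 'a \<Rightarrow> bool" where
  "separable01 A app k s \<longleftrightarrow>
     (\<exists>c\<in>A. (\<forall>a\<in>A. app c a \<noteq> None) \<and>
        (\<forall>a\<in>A. app c a = Some (zero_pca app k s) \<or> app c a = Some (one_pca app k s)) \<and>
        (\<forall>a\<in>A. app c a = Some (zero_pca app k s) \<longrightarrow> a \<noteq> one_pca app k s) \<and>
        (\<forall>a\<in>A. app c a = Some (one_pca app k s) \<longrightarrow> a \<noteq> zero_pca app k s))"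

definition nontotal :: "'a set \<Rightarrow> ('a \<Rightarrow> 'a \<Rightarrow> 'a option) \<Rightarrow> bool" where
  "nontotal A app \<longleftrightarrow> (\<exists>a\<in>A. \<exists>b\<in>A. app a b = None)"

end

theory Submission
  imports Defs "HOL-Library.Countable"
begin

text \<open>The model consists of the values (weak normal forms) of combinatory logic over K, S and
  infinitely many variables, under call-by-value evaluation. Variables are inert, so applying a
  variable is undefined. A total element c cannot inspect its argument: for a variable x not
  occurring in c, the evaluation of c x ends in 0 or 1, and substituting 0, resp. 1, for x in this
  evaluation shows c 0 = c 1. The countable model is then transported to nat along an injection.\<close>

definition transport_app :: "('a \<Rightarrow> 'b) \<Rightarrow> ('a \<Rightarrow> 'a \<Rightarrow> 'a option) \<Rightarrow> 'b \<Rightarrow> 'b \<Rightarrow> 'b option" where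
  "transport_app f app x y = map_option f (app (inv f x) (inv f y))"

context
  fixes f :: "'a \<Rightarrow> 'b"
  assumes inj_f: "inj f"
begin

lemma transport_app_image [simp]: "transport_app f app (f a) (f b) = map_option f (app a b)"
  by (simp add: transport_app_def inv_f_f inj_f)

lemma pap_transport_app:
  "pap (transport_app f app) (map_option f x) (map_option f y) = map_option f (pap app x y)"
  by (simp add: pap_def split: option.splits)

lemma pap_transport_app_Some:
  "pap (transport_app f app) (Some (f a)) (map_option f y) = map_option f (pap app (Some a) y)"
  "pap (transport_app f app) (map_option f x) (Some (f b)) = map_option f (pap app x (Some b))"
  using pap_transport_app[of _ "Some a" y] pap_transport_app[of _ x "Some b"] by simp_all

lemma numeral_pca_transport_app:
  "numeral_pca (transport_app f app) (f k) (f s) n = map_option f (numeral_pca app k s n)"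
  by (induction n)
     (simp_all add: comb_i_def comb_false_def comb_pair_def pap_transport_app pap_transport_app_Some)

lemma pca_transport_app:
  assumes "pca A app k s"
  shows "pca (f ` A) (transport_app f app) (f k) (f s)"
proof -
  note tr_simps = transport_app_image pap_transport_app pap_transport_app_Some
  from assms have "k \<in> A" "s \<in> A"
    and closed: "\<And>a b c. a \<in> A \<Longrightarrow> b \<in> A \<Longrightarrow> app a b = Some c \<Longrightarrow> c \<in> A"
    and k_ax: "\<And>a b. a \<in> A \<Longrightarrow> b \<in> A \<Longrightarrow> pap app (app k a) (Some b) = Some a"
    and s_defined: "\<And>a b. a \<in> A \<Longrightarrow> b \<in> A \<Longrightarrow> pap app (app s a) (Some b) \<noteq> None"
    and s_ax: "\<And>a b c. a \<in> A \<Longrightarrow> b \<in> A \<Longrightarrow> c \<in> A \<Longrightarrow>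
      pap app (pap app (app s a) (Some b)) (Some c) = pap app (app a c) (app b c)"
    unfolding pca_def by blast+
  show ?thesis
    unfolding pca_def ball_simps
  proof (intro conjI ballI allI impI)
    show "f k \<in> f ` A" "f s \<in> f ` A"
      using \<open>k \<in> A\<close> \<open>s \<in> A\<close> by simp_all
  next
    fix a b c
    assume "a \<in> A" "b \<in> A" "transport_app f app (f a) (f b) = Some c"
    then obtain c' where "app a b = Some c'" "c = f c'"
      by auto
    with \<open>a \<in> A\<close> \<open>b \<in> A\<close> closed show "c \<in> f ` A"
      by blast
  next
    fix a b
    assume "a \<in> A" "b \<in> A"
    then show "pap (transport_app f app) (transport_app f app (f k) (f a)) (Some (f b)) = Some (f a)"
      and "pap (transport_app f app) (transport_app f app (f s) (f a)) (Some (f b)) \<noteq> None"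
      using k_ax s_defined by (simp_all add: tr_simps)
  next
    fix a b c
    assume "a \<in> A" "b \<in> A" "c \<in> A"
    then show "pap (transport_app f app) (pap (transport_app f app) (transport_app f app (f s) (f a)) (Some (f b))) (Some (f c))
      = pap (transport_app f app) (transport_app f app (f a) (f c)) (transport_app f app (f b) (f c))"
      using s_ax by (simp only: tr_simps)
  qed
qed

lemma nontotal_transport_app: "nontotal (f ` A) (transport_app f app) \<longleftrightarrow> nontotal A app"
  by (simp add: nontotal_def)

lemma separable01_transport_app:
  assumes "numeral_pca app k s 0 \<noteq> None" and "numeral_pca app k s 1 \<noteq> None"
  shows "separable01 (f ` A) (transport_app f app) (f k) (f s) \<longleftrightarrow> separable01 A app k s"
proof -
  have "zero_pca (transport_app f app) (f k) (f s) = f (zero_pca app k s)"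
    and "one_pca (transport_app f app) (f k) (f s) = f (one_pca app k s)"
    using assms by (auto simp: zero_pca_def one_pca_def numeral_pca_transport_app simp del: numeral_pca.simps)
  then show ?thesis
    using inj_f by (simp add: separable01_def inj_eq)
qed

end

datatype comb = K | S | Var nat | App comb comb (infixl "\<cdot>" 100)

instance comb :: countable by countable_datatype

inductive comb_value :: "comb \<Rightarrow> bool" where
  "comb_value K"
| "comb_value S"
| "comb_value (Var n)"
| "comb_value a \<Longrightarrow> comb_value (K \<cdot> a)"
| "comb_value a \<Longrightarrow> comb_value (S \<cdot> a)"
| "comb_value a \<Longrightarrow> comb_value b \<Longrightarrow> comb_value (S \<cdot> a \<cdot> b)"

inductive evals :: "comb \<Rightarrow> comb \<Rightarrow> bool" and applies :: "comb \<Rightarrow> comb \<Rightarrow> comb \<Rightarrow> bool" where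
  evals_K: "evals K K"
| evals_S: "evals S S"
| evals_Var: "evals (Var n) (Var n)"
| evals_App: "evals t u \<Longrightarrow> evals t' u' \<Longrightarrow> applies u u' v \<Longrightarrow> evals (t \<cdot> t') v"
| applies_K: "applies K a (K \<cdot> a)"
| applies_K1: "applies (K \<cdot> a) b a"
| applies_S: "applies S a (S \<cdot> a)"
| applies_S1: "applies (S \<cdot> a) b (S \<cdot> a \<cdot> b)"
| applies_S2: "evals (a \<cdot> c \<cdot> (b \<cdot> c)) v \<Longrightarrow> applies (S \<cdot> a \<cdot> b) c v"

inductive_cases evals_AppE: "evals (t \<cdot> t') v"
inductive_cases evals_KE: "evals K v"
inductive_cases evals_SE: "evals S v"
inductive_cases evals_VarE: "evals (Var n) v"
inductive_cases applies_E: "applies a b v"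
inductive_cases applies_KE: "applies K a v"
inductive_cases applies_K1E: "applies (K \<cdot> a) b v"
inductive_cases applies_SE: "applies S a v"
inductive_cases applies_S1E: "applies (S \<cdot> a) b v"
inductive_cases applies_S2E: "applies (S \<cdot> a \<cdot> b) c v"
inductive_cases comb_value_KE: "comb_value (K \<cdot> a)"
inductive_cases comb_value_SE: "comb_value (S \<cdot> a)"

lemma evals_det: "evals t v \<Longrightarrow> evals t v' \<Longrightarrow> v' = v"
  and applies_det: "applies a b v \<Longrightarrow> applies a b v' \<Longrightarrow> v' = v"
proof (induction arbitrary: v' and v' rule: evals_applies.inducts)
  case (evals_App t u t' u' v)
  then show ?case by (metis evals_AppE)
next
  case (applies_K a)
  then show ?case by (metis applies_KE)
next
  case (applies_K1 a b)
  then show ?case by (metis applies_K1E)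
next
  case (applies_S a)
  then show ?case by (metis applies_SE)
next
  case (applies_S1 a b)
  then show ?case by (metis applies_S1E)
next
  case (applies_S2 a c b v)
  then show ?case by (metis applies_S2E)
qed (metis evals_KE evals_SE evals_VarE)+

lemma evals_value: "evals t v \<Longrightarrow> comb_value v"
  and applies_value: "applies a b v \<Longrightarrow> comb_value a \<Longrightarrow> comb_value b \<Longrightarrow> comb_value v"
  by (induction rule: evals_applies.inducts)
     (auto intro: comb_value.intros elim: comb_value_KE comb_value_SE)

lemma value_evals_self: "comb_value v \<Longrightarrow> evals v v"
  by (induction rule: comb_value.induct) (auto intro: evals_applies.intros)

lemma evals_App_values_iff:
  "comb_value a \<Longrightarrow> comb_value b \<Longrightarrow> evals (a \<cdot> b) v \<longleftrightarrow> applies a b v"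
  by (metis evals_AppE evals_App value_evals_self evals_det)

lemma applies_S2_iff:
  assumes "comb_value a" "comb_value b" "comb_value c"
  shows "applies (S \<cdot> a \<cdot> b) c v \<longleftrightarrow> (\<exists>u u'. applies a c u \<and> applies b c u' \<and> applies u u' v)"
proof -
  have "applies (S \<cdot> a \<cdot> b) c v \<longleftrightarrow> evals (a \<cdot> c \<cdot> (b \<cdot> c)) v"
    by (auto intro: applies_S2 elim: applies_E)
  also have "\<dots> \<longleftrightarrow> (\<exists>u u'. applies a c u \<and> applies b c u' \<and> applies u u' v)"
    using assms evals_App_values_iff by (blast intro: evals_App elim: evals_AppE)
  finally show ?thesis .
qed

fun subst :: "nat \<Rightarrow> comb \<Rightarrow> comb \<Rightarrow> comb" where
  "subst n w K = K"
| "subst n w S = S"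
| "subst n w (Var m) = (if m = n then w else Var m)"
| "subst n w (a \<cdot> b) = subst n w a \<cdot> subst n w b"

fun vars :: "comb \<Rightarrow> nat set" where
  "vars K = {}"
| "vars S = {}"
| "vars (Var m) = {m}"
| "vars (a \<cdot> b) = vars a \<union> vars b"

lemma finite_vars: "finite (vars t)"
  by (induction t) auto

lemma subst_fresh: "n \<notin> vars t \<Longrightarrow> subst n w t = t"
  by (induction t) auto

lemma evals_subst: "evals t v \<Longrightarrow> comb_value w \<Longrightarrow> evals (subst n w t) (subst n w v)"
  and applies_subst: "applies a b v \<Longrightarrow> comb_value w \<Longrightarrow> applies (subst n w a) (subst n w b) (subst n w v)"
  by (induction rule: evals_applies.inducts) (auto intro: evals_applies.intros value_evals_self)

lemma applies_fresh_Var: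
  assumes "applies a (Var n) v" "n \<notin> vars a" "n \<notin> vars v" "comb_value w"
  shows "applies a w v"
  using applies_subst[OF assms(1,4), of n] assms(2,3) by (simp add: subst_fresh)

definition comb_app :: "comb \<Rightarrow> comb \<Rightarrow> comb option" where
  "comb_app a b = (if \<exists>v. applies a b v then Some (THE v. applies a b v) else None)"

lemma comb_app_eq_Some_iff: "comb_app a b = Some v \<longleftrightarrow> applies a b v"
  unfolding comb_app_def by (auto intro: the_equality theI applies_det)

lemma comb_app_eq_None_iff: "comb_app a b = None \<longleftrightarrow> (\<forall>v. \<not> applies a b v)"
  unfolding comb_app_def by auto

lemma comb_app_K [simp]: "comb_app K a = Some (K \<cdot> a)"
  and comb_app_K1 [simp]: "comb_app (K \<cdot> a) b = Some a"
  and comb_app_S [simp]: "comb_app S a = Some (S \<cdot> a)"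
  and comb_app_S1 [simp]: "comb_app (S \<cdot> a) b = Some (S \<cdot> a \<cdot> b)"
  by (simp_all add: comb_app_eq_Some_iff evals_applies.intros)

lemma comb_app_S2:
  assumes "comb_value a" "comb_value b" "comb_value c"
  shows "comb_app (S \<cdot> a \<cdot> b) c = pap comb_app (comb_app a c) (comb_app b c)"
proof -
  have "comb_app (S \<cdot> a \<cdot> b) c = Some v \<longleftrightarrow> pap comb_app (comb_app a c) (comb_app b c) = Some v" for v
    using assms
    by (auto simp: applies_S2_iff comb_app_eq_Some_iff comb_app_eq_None_iff pap_def
        split: option.splits dest: applies_det)
  then show ?thesis
    by (metis option.exhaust)
qed

lemma pca_comb: "pca (Collect comb_value) comb_app K S"
  unfolding pca_def
  by (auto simp: pap_def comb_app_S2 comb_app_eq_Some_iff applies_value intro: comb_value.intros)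

lemma nontotal_comb: "nontotal (Collect comb_value) comb_app"
  unfolding nontotal_def
  by (auto simp: comb_app_eq_None_iff intro!: bexI[of _ "Var 0"] comb_value.intros elim: applies_E)

lemma zero_pca_comb: "zero_pca comb_app K S = S \<cdot> K \<cdot> K"
  by (simp add: zero_pca_def comb_i_def pap_def)

lemma one_pca_comb:
  "one_pca comb_app K S = S \<cdot> (S \<cdot> (S \<cdot> K \<cdot> K) \<cdot> (K \<cdot> (K \<cdot> (S \<cdot> K \<cdot> K)))) \<cdot> (K \<cdot> (S \<cdot> K \<cdot> K))"
  by (simp add: one_pca_def comb_i_def comb_false_def comb_pair_def pap_def)

lemma not_separable01_comb: "\<not> separable01 (Collect comb_value) comb_app K S"
proof
  let ?zero = "zero_pca comb_app K S" and ?one = "one_pca comb_app K S"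
  assume "separable01 (Collect comb_value) comb_app K S"
  then obtain c where c: "comb_value c"
    and answer: "\<And>a. comb_value a \<Longrightarrow> comb_app c a = Some ?zero \<or> comb_app c a = Some ?one"
    and sep0: "\<And>a. comb_value a \<Longrightarrow> comb_app c a = Some ?zero \<Longrightarrow> a \<noteq> ?one"
    and sep1: "\<And>a. comb_value a \<Longrightarrow> comb_app c a = Some ?one \<Longrightarrow> a \<noteq> ?zero"
    unfolding separable01_def by auto
  obtain n where n: "n \<notin> vars c"
    using finite_vars ex_new_if_finite infinite_UNIV_nat by blast
  have closed: "vars ?zero = {}" "vars ?one = {}" and val: "comb_value ?zero" "comb_value ?one"
    by (simp_all add: zero_pca_comb one_pca_comb comb_value.intros)
  have "comb_app c (Var n) = Some ?zero \<or> comb_app c (Var n) = Some ?one"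
    by (rule answer) (rule comb_value.intros)
  then obtain v where v: "applies c (Var n) v" "v = ?zero \<or> v = ?one"
    by (auto simp: comb_app_eq_Some_iff)
  have "comb_app c ?zero = Some v" "comb_app c ?one = Some v"
    using v closed val n by (auto simp: comb_app_eq_Some_iff intro: applies_fresh_Var)
  moreover have "?zero \<noteq> ?one"
    by (simp add: zero_pca_comb one_pca_comb)
  ultimately show False
    using v(2) sep0 sep1 val by blast
qed

theorem mainTheorem13:
  shows "\<exists>(A :: nat set) app k s. pca A app k s \<and> nontotal A app \<and> \<not> separable01 A app k s"
proof (intro exI conjI)
  have numerals_defined: "numeral_pca comb_app K S 0 \<noteq> None" "numeral_pca comb_app K S 1 \<noteq> None"
    by (simp_all add: comb_i_def comb_false_def comb_pair_def pap_def)
  show "pca (to_nat ` Collect comb_value) (transport_app to_nat comb_app) (to_nat K) (to_nat S)"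
    by (rule pca_transport_app[OF inj_to_nat pca_comb])
  show "nontotal (to_nat ` Collect comb_value) (transport_app to_nat comb_app)"
    using nontotal_comb by (simp add: nontotal_transport_app[OF inj_to_nat])
  show "\<not> separable01 (to_nat ` Collect comb_value) (transport_app to_nat comb_app) (to_nat K) (to_nat S)"
    using not_separable01_comb by (simp add: separable01_transport_app[OF inj_to_nat numerals_defined])
qed

end
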